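(* Let $M=p_i^{n_i}p_j^{n_j}p_k^{n_k}$ with distinct primes $p_i,p_j,p_k$ and $n_i,n_j,n_k\in\mathbb{N}$, let $A\oplus B=\mathbb{Z}_M$ with $\Phi_M(X)\mid A(X)$, and assume $A$ is fibered on $D$-grids, where $D=M/(p_ip_jp_k)$. Let $a,a'\in A$ and $b,b'\in B$. If $(b*F(a))\cap(b'*F(a'))\neq\emptyset$, then $b=b'$ and $F(a)=F(a')$.
   Context: $A\oplus B=\mathbb{Z}_M$ means every element of $\mathbb{Z}_M$ is uniquely $a+b$, $a\in A$, $b\in B$; $A(X)=\sum_{a\in A}X^a$ ($A$ in $\{0,\dots,M-1\}$), $\Phi_M$ the $M$-th cyclotomic polynomial. For $d\mid M$, $\Lambda(x,d)=\{x'\in\mathbb{Z}_M:d\mid x-x'\}$. For $\nu\in\{i,j,k\}$, $F_\nu=\{0,M/p_\nu,\dots,(p_\nu-1)M/p_\nu\}$, $x*Y=\{x+y:y\in Y\}$. A set $Y$ is fibered in the $p_\nu$ direction if $Y$ is a union of sets $y*F_\nu$ with $y\in Y$. "$A$ is fibered on $D$-grids" means for every $a\in A$, $A\cap\Lambda(a,D)$ is fibered in some direction $p_\nu$. The function $\kappa:A\to\{i,j,k\}$: for each $D$-grid $\Lambda(x,D)$ meeting $A$, fix one direction $\nu(x)$ in which $A\cap\Lambda(x,D)$ is fibered (chosen arbitrarily if several) and set $\kappa(a)=\nu(x)$ for all $a\in A\cap\Lambda(x,D)$. Define $F(a)=a*F_{\kappa(a)}$ for $a\in A$ (so $F(a)\subset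 A$). *)

theory Defs
  imports "HOL-Complex_Analysis.Complex_Analysis" "HOL-Computational_Algebra.Polynomial"
begin

(* Z_M is represented by {0..<M} with addition mod M. *)

definition cyclotomic :: "nat \<Rightarrow> complex poly" where
  "cyclotomic M = (\<Prod>k\<in>{k. k < M \<and> coprime k M}. [:- cis (2 * pi * real k / real M), 1:])"

definition mask_poly :: "nat set \<Rightarrow> complex poly" where
  "mask_poly A = (\<Sum>a\<in>A. monom 1 a)"

definition tiling :: "nat \<Rightarrow> nat set \<Rightarrow> nat set \<Rightarrow> bool" where
  "tiling M A B \<longleftrightarrow> A \<subseteq> {0..<M} \<and> B \<subseteq> {0..<M} \<and>
     (\<forall>x\<in>{0..<M}. \<exists>!(a,b). a \<in> A \<and> b \<in> B \<and> (a + b) mod M = x)"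

definition translate :: "nat \<Rightarrow> nat \<Rightarrow> nat set \<Rightarrow> nat set" where
  "translate M x Y = {(x + y) mod M | y. y \<in> Y}"

definition grid :: "nat \<Rightarrow> nat \<Rightarrow> nat \<Rightarrow> nat set" where
  "grid M x d = {x'. x' < M \<and> x mod d = x' mod d}"

definition fiber :: "nat \<Rightarrow> nat \<Rightarrow> nat set" where
  "fiber M p = {t * (M div p) | t. t < p}"

definition fibered :: "nat \<Rightarrow> nat set \<Rightarrow> nat \<Rightarrow> bool" where
  "fibered M Y p \<longleftrightarrow> Y = (\<Union>y\<in>Y. translate M y (fiber M p))"

definition fibered_on_grids :: "nat \<Rightarrow> nat set \<Rightarrow> nat \<Rightarrow> nat set \<Rightarrow> bool" where
  "fibered_on_grids M A D P \<longleftrightarrow> (\<forall>a\<in>A. \<exists>p\<in>P. fibered M (A \<inter> grid M a D) p)"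

definition admissible_kappa :: "nat \<Rightarrow> nat set \<Rightarrow> nat \<Rightarrow> nat set \<Rightarrow> (nat \<Rightarrow> nat) \<Rightarrow> bool" where
  "admissible_kappa M A D P \<kappa> \<longleftrightarrow>
     (\<forall>a\<in>A. \<kappa> a \<in> P \<and> fibered M (A \<inter> grid M a D) (\<kappa> a)) \<and>
     (\<forall>a\<in>A. \<forall>a'\<in>A. a mod D = a' mod D \<longrightarrow> \<kappa> a = \<kappa> a')"

end

theory Submission
  imports Defs
begin

text \<open>
  For a direction
  \<open>p\<close> with \<open>p * D\<close> dividing \<open>M\<close>, the set \<open>a * F\<^sub>p\<close> is the residue class of \<open>a\<close> modulo
  \<open>M/p\<close>, so it lies in the \<open>D\<close>-grid of \<open>a\<close> and is the same set for each of its points. If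
  \<open>b + c = b' + c'\<close> with \<open>c \<in> F(a)\<close>, \<open>c' \<in> F(a')\<close>, then \<open>c, c' \<in> A\<close>, and uniqueness of the
  decomposition \<open>A \<oplus> B\<close> forces \<open>b = b'\<close> and \<open>c = c'\<close>. Hence \<open>a\<close> and \<open>a'\<close> share a \<open>D\<close>-grid,
  \<open>\<kappa> a = \<kappa> a'\<close>, and \<open>F(a) = F(c) = F(a')\<close>.
\<close>

lemma mod_add_mult_reduce:
  fixes a k m p :: nat
  shows "(a + k * m) mod (m * p) = (a + (k mod p) * m) mod (m * p)"
proof -
  have "k * m = (k mod p) * m + (k div p) * (m * p)"
    by (metis add.commute div_mult_mod_eq distrib_right mult.assoc mult.commute)
  then show ?thesis by (simp add: add.assoc[symmetric])
qed

lemma translate_fiber_eq_grid: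
  fixes M p a :: nat
  assumes "p dvd M" "0 < p" "0 < M"
  shows "translate M a (fiber M p) = grid M a (M div p)"
proof -
  define m where "m = M div p"
  have M_eq: "M = m * p" using assms(1) m_def by simp
  have "m dvd M" using M_eq by simp
  show ?thesis unfolding m_def[symmetric]
  proof
    show "translate M a (fiber M p) \<subseteq> grid M a m"
      using assms(3) \<open>m dvd M\<close>
      by (auto simp: translate_def fiber_def grid_def m_def[symmetric] mod_mod_cancel)
  next
    show "grid M a m \<subseteq> translate M a (fiber M p)"
    proof
      fix c assume "c \<in> grid M a m"
      then have c: "c < M" "c mod m = a mod m" by (auto simp: grid_def)
      define r where "r = a mod M"
      have "r < M" using assms(3) r_def by simp
      have "(c + M) mod m = r mod m"
        using c(2) \<open>m dvd M\<close> M_eq by (simp add: r_def mod_mod_cancel)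
      then have "m dvd c + M - r"
        using \<open>r < M\<close> by (simp add: mod_eq_dvd_iff_nat)
      then obtain k where k: "c + M - r = k * m" by (metis dvd_def mult.commute)
      have "r + k * m = c + M" using k \<open>r < M\<close> by linarith
      have "(a + (k mod p) * m) mod M = (a + k * m) mod M"
        using M_eq mod_add_mult_reduce by presburger
      also have "\<dots> = (r + k * m) mod M" by (simp add: r_def mod_add_left_eq)
      also have "\<dots> = c"
        using \<open>r + k * m = c + M\<close> c(1) by simp
      finally have "c = (a + (k mod p) * m) mod M" ..
      moreover have "k mod p < p" using assms(2) by simp
      ultimately show "c \<in> translate M a (fiber M p)"
        by (auto simp: translate_def fiber_def m_def)
    qed
  qed
qed

lemma grid_eq_of_mem:
  "c \<in> grid M a d \<Longrightarrow> grid M c d = grid M a d"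
  by (auto simp: grid_def)

lemma grid_mod_eq:
  fixes c a d e :: nat
  assumes "c \<in> grid M a d" "e dvd d"
  shows "c mod e = a mod e"
proof -
  have "c mod d mod e = a mod d mod e" using assms(1) by (simp add: grid_def)
  then show ?thesis using assms(2) by (simp add: mod_mod_cancel)
qed

lemma fibered_translate_subset:
  assumes "fibered M Y p" "y \<in> Y"
  shows "translate M y (fiber M p) \<subseteq> Y"
proof -
  have "(\<Union>y\<in>Y. translate M y (fiber M p)) = Y"
    using assms(1) unfolding fibered_def by (rule sym)
  then show ?thesis using assms(2) by blast
qed

lemma admissible_kappa_translate_subset:
  assumes "admissible_kappa M A D P \<kappa>" "A \<subseteq> {0..<M}" "a \<in> A"
  shows "translate M a (fiber M (\<kappa> a)) \<subseteq> A"
proof -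
  have "a \<in> A \<inter> grid M a D" using assms(2,3) by (auto simp: grid_def)
  moreover have "fibered M (A \<inter> grid M a D) (\<kappa> a)"
    using assms(1,3) unfolding admissible_kappa_def by blast
  ultimately have "translate M a (fiber M (\<kappa> a)) \<subseteq> A \<inter> grid M a D"
    by (intro fibered_translate_subset)
  then show ?thesis by blast
qed

lemma tiling_decomposition_unique:
  assumes "tiling M A B" "c \<in> A" "c' \<in> A" "b \<in> B" "b' \<in> B"
    and "(b + c) mod M = (b' + c') mod M"
  shows "c = c' \<and> b = b'"
proof -
  have "0 < M" using assms(1,2) by (auto simp: tiling_def)
  then have "(b + c) mod M \<in> {0..<M}" by simp
  then have unique: "\<exists>!(u, v). u \<in> A \<and> v \<in> B \<and> (u + v) mod M = (b + c) mod M"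
    using assms(1) by (simp add: tiling_def)
  have "(THE (u, v). u \<in> A \<and> v \<in> B \<and> (u + v) mod M = (b + c) mod M) = (c, b)"
    using assms(2,4) by (intro the1_equality[OF unique]) (simp add: add.commute)
  moreover have "(THE (u, v). u \<in> A \<and> v \<in> B \<and> (u + v) mod M = (b + c) mod M) = (c', b')"
    using assms(3,5,6) by (intro the1_equality[OF unique]) (simp add: add.commute)
  ultimately show ?thesis by simp
qed

lemma tiling_kappa_fiber_translates_overlap:
  fixes M D :: nat and P A B :: "nat set"
  assumes tiling: "tiling M A B" and kappa: "admissible_kappa M A D P \<kappa>"
    and directions: "\<And>p. p \<in> P \<Longrightarrow> 0 < p \<and> p * D dvd M"
    and "a \<in> A" "a' \<in> A" "b \<in> B" "b' \<in> B"
    and "translate M b (translate M a (fiber M (\<kappa> a))) \<inter>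
         translate M b' (translate M a' (fiber M (\<kappa> a'))) \<noteq> {}"
  shows "b = b' \<and> translate M a (fiber M (\<kappa> a)) = translate M a' (fiber M (\<kappa> a'))"
proof -
  have A_sub: "A \<subseteq> {0..<M}" using tiling by (simp add: tiling_def)
  then have "0 < M" using \<open>a \<in> A\<close> by auto
  have fiber_grid: "translate M x (fiber M (\<kappa> x)) = grid M x (M div \<kappa> x)"
    and D_dvd: "D dvd M div \<kappa> x" if "x \<in> A" for x
  proof -
    have "\<kappa> x \<in> P" using kappa that unfolding admissible_kappa_def by blast
    then have pos: "0 < \<kappa> x" and dvd: "\<kappa> x * D dvd M" using directions by auto
    then have "\<kappa> x dvd M" using dvd_mult_left by blast
    then show "translate M x (fiber M (\<kappa> x)) = grid M x (M div \<kappa> x)"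
      using translate_fiber_eq_grid pos \<open>0 < M\<close> by blast
    show "D dvd M div \<kappa> x"
      using dvd pos \<open>\<kappa> x dvd M\<close> by (simp add: dvd_div_iff_mult mult.commute)
  qed
  obtain c c' where c: "c \<in> translate M a (fiber M (\<kappa> a))"
    and c': "c' \<in> translate M a' (fiber M (\<kappa> a'))"
    and sums: "(b + c) mod M = (b' + c') mod M"
    using assms(8) unfolding translate_def[of M b] translate_def[of M b'] by blast
  have "c \<in> A" "c' \<in> A"
    using c c' admissible_kappa_translate_subset[OF kappa A_sub] \<open>a \<in> A\<close> \<open>a' \<in> A\<close> by blast+
  then have "c = c'" and "b = b'"
    using tiling_decomposition_unique[OF tiling _ _ \<open>b \<in> B\<close> \<open>b' \<in> B\<close> sums] by auto
  have c_grid: "c \<in> grid M a (M div \<kappa> a)" and c'_grid: "c \<in> grid M a' (M div \<kappa> a')"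
    using c c' \<open>c = c'\<close> fiber_grid \<open>a \<in> A\<close> \<open>a' \<in> A\<close> by simp_all
  have "a mod D = c mod D"
    using grid_mod_eq[OF c_grid D_dvd[OF \<open>a \<in> A\<close>]] by simp
  also have "\<dots> = a' mod D"
    using grid_mod_eq[OF c'_grid D_dvd[OF \<open>a' \<in> A\<close>]] .
  finally have "\<kappa> a = \<kappa> a'"
    using kappa \<open>a \<in> A\<close> \<open>a' \<in> A\<close> unfolding admissible_kappa_def by blast
  then have "grid M a (M div \<kappa> a) = grid M a' (M div \<kappa> a')"
    using grid_eq_of_mem[OF c_grid] grid_eq_of_mem[OF c'_grid] by simp
  then show ?thesis
    using \<open>b = b'\<close> fiber_grid \<open>a \<in> A\<close> \<open>a' \<in> A\<close> by simp
qed

theorem lemma7p3: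
  fixes pi pj pk ni nj nk M D :: nat and A B :: "nat set" and \<kappa> :: "nat \<Rightarrow> nat"
    and a a' b b' :: nat
  assumes "prime pi" "prime pj" "prime pk"
    and "pi \<noteq> pj" "pi \<noteq> pk" "pj \<noteq> pk"
    and "ni \<ge> 1" "nj \<ge> 1" "nk \<ge> 1"
    and "M = pi ^ ni * pj ^ nj * pk ^ nk"
    and "tiling M A B"
    and "cyclotomic M dvd mask_poly A"
    and "D = M div (pi * pj * pk)"
    and "fibered_on_grids M A D {pi, pj, pk}"
    and "admissible_kappa M A D {pi, pj, pk} \<kappa>"
    and "a \<in> A" "a' \<in> A" "b \<in> B" "b' \<in> B"
    and "translate M b (translate M a (fiber M (\<kappa> a))) \<inter>
         translate M b' (translate M a' (fiber M (\<kappa> a'))) \<noteq> {}"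
  shows "b = b' \<and> translate M a (fiber M (\<kappa> a)) = translate M a' (fiber M (\<kappa> a'))"
proof (rule tiling_kappa_fiber_translates_overlap)
  have "pi * pj * pk dvd M"
    using assms(7-10) by (simp add: dvd_power mult_dvd_mono)
  then have M_eq: "M = pi * pj * pk * D" using assms(13) by simp
  show "0 < p \<and> p * D dvd M" if "p \<in> {pi, pj, pk}" for p
    using that assms(1-3) M_eq by (auto simp: prime_gt_0_nat)
qed (rule assms)+

end
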